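(* There exists a deterministic algorithm that finds the sink of any $n$-dimensional Matoušek-type USO using at most $n$ vertex evaluations.
   Context: All vectors and matrices are over $GF(2)$; $\oplus$ denotes xor. An orientation of the hypercube $\{0,1\}^n$ is given by an outmap $o:\{0,1\}^n\to\{0,1\}^n$, the edge $\{v,v\oplus e_i\}$ being directed away from $v$ iff $o(v)_i=1$. An $n$-dimensional Matoušek-type USO is an orientation $o(v)=M(v\oplus s)$ with $M=PAP^T$ for a permutation matrix $P$ and an invertible upper-triangular $A\in\{0,1\}^{n\times n}$, and $s\in\{0,1\}^n$, the unique sink ($o(s)=0$). A sink-finding algorithm queries vertices $v$ and receives $o(v)$; it succeeds when it can output $s$. *)

theory Defs
  imports Main
begin

text \<open>Vectors over GF(2) of dimension n are represented as functions
  nat => bool that vanish (are False) outside the index range below n.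
  Matrices over GF(2) are functions nat => nat => bool; only entries with
  both indices below n are relevant.\<close>

type_synonym gf2vec = "nat \<Rightarrow> bool"
type_synonym gf2mat = "nat \<Rightarrow> nat \<Rightarrow> bool"

definition cube :: "nat \<Rightarrow> gf2vec set" where
  "cube n = {v. \<forall>j\<ge>n. \<not> v j}"

definition xorv :: "gf2vec \<Rightarrow> gf2vec \<Rightarrow> gf2vec" where
  "xorv u v = (\<lambda>i. u i \<noteq> v i)"

definition mat_vec :: "nat \<Rightarrow> gf2mat \<Rightarrow> gf2vec \<Rightarrow> gf2vec" where
  "mat_vec n M v = (\<lambda>i. i < n \<and> odd (card {j. j < n \<and> M i j \<and> v j}))"

definition mat_mul :: "nat \<Rightarrow> gf2mat \<Rightarrow> gf2mat \<Rightarrow> gf2mat" where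
  "mat_mul n A B = (\<lambda>i k. i < n \<and> k < n \<and> odd (card {j. j < n \<and> A i j \<and> B j k}))"

definition transp :: "gf2mat \<Rightarrow> gf2mat" where
  "transp A = (\<lambda>i j. A j i)"

definition id_mat :: "nat \<Rightarrow> gf2mat" where
  "id_mat n = (\<lambda>i j. i < n \<and> i = j)"

definition mat_eq :: "nat \<Rightarrow> gf2mat \<Rightarrow> gf2mat \<Rightarrow> bool" where
  "mat_eq n A B \<longleftrightarrow> (\<forall>i<n. \<forall>j<n. A i j = B i j)"

definition invertible_mat :: "nat \<Rightarrow> gf2mat \<Rightarrow> bool" where
  "invertible_mat n A \<longleftrightarrow>
     (\<exists>B. mat_eq n (mat_mul n A B) (id_mat n) \<and> mat_eq n (mat_mul n B A) (id_mat n))"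

definition upper_triangular :: "nat \<Rightarrow> gf2mat \<Rightarrow> bool" where
  "upper_triangular n A \<longleftrightarrow> (\<forall>i<n. \<forall>j<n. j < i \<longrightarrow> \<not> A i j)"

definition perm_matrix :: "nat \<Rightarrow> gf2mat \<Rightarrow> bool" where
  "perm_matrix n P \<longleftrightarrow>
     (\<exists>\<sigma>. bij_betw \<sigma> {..<n} {..<n} \<and> (\<forall>i<n. \<forall>j<n. P i j = (\<sigma> j = i)))"

definition matousek_uso :: "nat \<Rightarrow> (gf2vec \<Rightarrow> gf2vec) \<Rightarrow> gf2vec \<Rightarrow> bool" where
  "matousek_uso n ou s \<longleftrightarrow> s \<in> cube n \<and>
     (\<exists>P A. perm_matrix n P \<and> upper_triangular n A \<and> invertible_mat n A \<and>
        (\<forall>v\<in>cube n. ou v = mat_vec n (mat_mul n (mat_mul n P A) (transp P)) (xorv v s)))"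

text \<open>A deterministic adaptive query algorithm: given the history of
  (queried vertex, answer) pairs it chooses the next query. run nxt ou k is the
  history after k queries.\<close>
fun run :: "((gf2vec \<times> gf2vec) list \<Rightarrow> gf2vec) \<Rightarrow> (gf2vec \<Rightarrow> gf2vec) \<Rightarrow> nat
            \<Rightarrow> (gf2vec \<times> gf2vec) list" where
  "run nxt ou 0 = []"
| "run nxt ou (Suc k) = (let h = run nxt ou k; q = nxt h in h @ [(q, ou q)])"

end

theory Submission
  imports Defs
begin

text \<open>The algorithm starts at the origin and always jumps from the current vertex v to
  v \<oplus> o(v), where o(v) = M (v \<oplus> s) with M = P A P^T. An invertible upper triangular
  matrix over GF(2) has unit diagonal, so M has unit diagonal and becomes upper triangular
  once the coordinates are ranked by the permutation of P. If v already agrees with s in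
  every coordinate of higher rank than i, then o(v) i = v i \<oplus> s i, so the jump makes
  coordinate i correct. Hence after k jumps the k coordinates of highest rank agree with s,
  and after n jumps the vertex is the sink.\<close>

lemma odd_card_subset_singleton:
  assumes "S \<subseteq> {a}"
  shows "odd (card S) \<longleftrightarrow> a \<in> S"
proof -
  from assms have "S = {} \<or> S = {a}" by blast
  then show ?thesis by auto
qed

lemma mat_mul_single_term:
  assumes "\<forall>j<n. j \<noteq> t \<longrightarrow> \<not> (A i j \<and> B j k)"
  shows "mat_mul n A B i k \<longleftrightarrow> i < n \<and> k < n \<and> t < n \<and> A i t \<and> B t k"
proof -
  have "{j. j < n \<and> A i j \<and> B j k} \<subseteq> {t}" using assms by auto
  from odd_card_subset_singleton[OF this] show ?thesis by (auto simp: mat_mul_def)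
qed

lemma mat_vec_single_term:
  assumes "\<forall>j<n. j \<noteq> i \<longrightarrow> \<not> (M i j \<and> x j)"
  shows "mat_vec n M x i \<longleftrightarrow> i < n \<and> M i i \<and> x i"
proof -
  have "{j. j < n \<and> M i j \<and> x j} \<subseteq> {i}" using assms by auto
  from odd_card_subset_singleton[OF this] show ?thesis by (auto simp: mat_vec_def)
qed

lemma perm_conjugate_entry:
  assumes \<sigma>: "bij_betw \<sigma> {..<n} {..<n}" and P: "\<forall>i<n. \<forall>j<n. P i j = (\<sigma> j = i)"
    and "a < n" "b < n"
  shows "mat_mul n (mat_mul n P A) (transp P) (\<sigma> a) (\<sigma> b) = A a b"
proof -
  have \<sigma>_eq: "\<sigma> j = \<sigma> k \<longleftrightarrow> j = k" if "j < n" "k < n" for j k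
    using \<sigma> that by (auto dest: bij_betw_imp_inj_on inj_onD)
  have \<sigma>_lt: "\<sigma> j < n" if "j < n" for j
    using \<sigma> that by (auto dest: bij_betwE)
  have PA: "mat_mul n P A (\<sigma> a) k = A a k" if "k < n" for k
    using mat_mul_single_term[of n a P "\<sigma> a" A k] P \<sigma>_eq \<sigma>_lt \<open>a < n\<close> that by auto
  show ?thesis
    using mat_mul_single_term[of n b "mat_mul n P A" "\<sigma> a" "transp P" "\<sigma> b"]
      P PA \<sigma>_eq \<sigma>_lt \<open>a < n\<close> \<open>b < n\<close> by (auto simp: transp_def)
qed

lemma upper_triangular_left_inverse_diag:
  assumes upper: "upper_triangular n A" and BA: "mat_eq n (mat_mul n B A) (id_mat n)"
    and "t < n"
  shows "A t t"
proof -
  \<comment> \<open>B vanishes below the diagonal in the columns left of t, so entry (u, t) of B A,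
    for u \<ge> t, reduces to B u t \<and> A t t.\<close>
  have "A t t \<and> (\<forall>u<n. t < u \<longrightarrow> \<not> B u t)" if "t < n" for t
    using that
  proof (induction t rule: less_induct)
    case (less t)
    have entry: "B u t \<and> A t t \<longleftrightarrow> u = t" if "u < n" "t \<le> u" for u
    proof -
      have "\<forall>j<n. j \<noteq> t \<longrightarrow> \<not> (B u j \<and> A j t)"
        using upper less that unfolding upper_triangular_def by (metis le_less_trans linorder_neqE_nat)
      from mat_mul_single_term[of n t B u A t, OF this] show ?thesis
        using BA less.prems that unfolding mat_eq_def id_mat_def by auto
    qed
    show ?case using entry[of t] entry less.prems by fastforce
  qed
  with \<open>t < n\<close> show ?thesis by blast
qed

lemma upper_triangular_invertible_diag:
  "upper_triangular n A \<Longrightarrow> invertible_mat n A \<Longrightarrow> t < n \<Longrightarrow> A t t"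
  unfolding invertible_mat_def using upper_triangular_left_inverse_diag by blast

definition flip_outmap :: "nat \<Rightarrow> (gf2vec \<Rightarrow> gf2vec) \<Rightarrow> gf2vec \<Rightarrow> gf2vec" where
  "flip_outmap n ou v = (\<lambda>i. i < n \<and> xorv v (ou v) i)"

definition flip_last_query :: "nat \<Rightarrow> (gf2vec \<times> gf2vec) list \<Rightarrow> gf2vec" where
  "flip_last_query n h =
     (if h = [] then (\<lambda>_. False) else (\<lambda>i. i < n \<and> xorv (fst (last h)) (snd (last h)) i))"

lemma flip_last_query_cube: "flip_last_query n h \<in> cube n"
  by (auto simp: flip_last_query_def cube_def)

lemma flip_last_query_run:
  "flip_last_query n (run (flip_last_query n) ou k) = (flip_outmap n ou ^^ k) (\<lambda>_. False)"
  by (induction k) (simp_all add: flip_last_query_def flip_outmap_def Let_def)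

lemma flip_outmap_iterate_cube: "(flip_outmap n ou ^^ k) (\<lambda>_. False) \<in> cube n"
  by (cases k) (auto simp: cube_def flip_outmap_def)

lemma flip_outmap_fixes_coordinate:
  assumes ou: "ou v = mat_vec n M (xorv v s)" and "i < n" and "M i i"
    and agree: "\<forall>j<n. j \<noteq> i \<longrightarrow> M i j \<longrightarrow> v j = s j"
  shows "flip_outmap n ou v i = s i"
proof -
  have "\<forall>j<n. j \<noteq> i \<longrightarrow> \<not> (M i j \<and> xorv v s j)"
    using agree by (simp add: xorv_def)
  from mat_vec_single_term[of n i M "xorv v s", OF this] show ?thesis
    using assms by (auto simp: flip_outmap_def xorv_def)
qed

lemma flip_outmap_iterate_agrees:
  assumes ou: "\<forall>v\<in>cube n. ou v = mat_vec n M (xorv v s)"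
    and rank: "\<forall>i<n. r i < n" and diag: "\<forall>i<n. M i i"
    and triangular: "\<forall>i<n. \<forall>j<n. M i j \<longrightarrow> i \<noteq> j \<longrightarrow> r i < r j"
    and "i < n" "n \<le> r i + k"
  shows "(flip_outmap n ou ^^ k) (\<lambda>_. False) i = s i"
  using assms(5,6)
proof (induction k arbitrary: i)
  case 0
  then show ?case using rank by fastforce
next
  case (Suc k)
  let ?v = "(flip_outmap n ou ^^ k) (\<lambda>_. False)"
  have "\<forall>j<n. j \<noteq> i \<longrightarrow> M i j \<longrightarrow> ?v j = s j"
  proof (intro allI impI)
    fix j assume "j < n" "j \<noteq> i" "M i j"
    with triangular Suc.prems have "n \<le> r j + k" by fastforce
    with Suc.IH \<open>j < n\<close> show "?v j = s j" by blast
  qed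
  with flip_outmap_fixes_coordinate ou flip_outmap_iterate_cube Suc.prems diag
  show ?case by simp
qed

lemma perm_conjugate_upper_triangular_rank:
  assumes "perm_matrix n P" and upper: "upper_triangular n A" and diag: "\<forall>t<n. A t t"
  obtains r where "\<forall>i<n. r i < n"
    and "\<forall>i<n. mat_mul n (mat_mul n P A) (transp P) i i"
    and "\<forall>i<n. \<forall>j<n. mat_mul n (mat_mul n P A) (transp P) i j \<longrightarrow> i \<noteq> j \<longrightarrow> r i < r j"
proof -
  obtain \<sigma> where \<sigma>: "bij_betw \<sigma> {..<n} {..<n}" and P: "\<forall>i<n. \<forall>j<n. P i j = (\<sigma> j = i)"
    using \<open>perm_matrix n P\<close> unfolding perm_matrix_def by blast
  define r where "r = inv_into {..<n} \<sigma>"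
  have rank: "\<forall>i<n. r i < n"
    unfolding r_def using bij_betw_inv_into[OF \<sigma>] by (auto dest: bij_betwE)
  have \<sigma>_r: "\<sigma> (r i) = i" if "i < n" for i
    unfolding r_def using bij_betw_inv_into_right[OF \<sigma>] that by blast
  have M: "mat_mul n (mat_mul n P A) (transp P) i j = A (r i) (r j)" if "i < n" "j < n" for i j
    using perm_conjugate_entry[OF \<sigma> P, of "r i" "r j" A] rank that by (simp add: \<sigma>_r)
  have "r i < r j" if "i < n" "j < n" "A (r i) (r j)" "i \<noteq> j" for i j
  proof -
    have "r i \<noteq> r j" using \<sigma>_r that by metis
    moreover have "\<not> r j < r i" using upper rank that unfolding upper_triangular_def by blast
    ultimately show ?thesis by simp
  qed
  with rank M diag show ?thesis by (intro that) auto
qed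

lemma matousek_uso_flip_outmap_sink:
  assumes "matousek_uso n ou s"
  shows "(flip_outmap n ou ^^ n) (\<lambda>_. False) = s"
proof -
  obtain P A where s: "s \<in> cube n" and P: "perm_matrix n P" and upper: "upper_triangular n A"
    and "invertible_mat n A"
    and ou: "\<forall>v\<in>cube n. ou v = mat_vec n (mat_mul n (mat_mul n P A) (transp P)) (xorv v s)"
    using assms unfolding matousek_uso_def by blast
  then have "\<forall>t<n. A t t" using upper_triangular_invertible_diag by blast
  then obtain r where rank: "\<forall>i<n. r i < n"
    and diag: "\<forall>i<n. mat_mul n (mat_mul n P A) (transp P) i i"
    and triangular:
      "\<forall>i<n. \<forall>j<n. mat_mul n (mat_mul n P A) (transp P) i j \<longrightarrow> i \<noteq> j \<longrightarrow> r i < r j"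
    using perm_conjugate_upper_triangular_rank[OF P upper] by blast
  have "(flip_outmap n ou ^^ n) (\<lambda>_. False) i = s i" for i
  proof (cases "i < n")
    case True
    then show ?thesis using flip_outmap_iterate_agrees[OF ou rank diag triangular] by simp
  next
    case False
    then show ?thesis using flip_outmap_iterate_cube[of n n ou] s by (simp add: cube_def)
  qed
  then show ?thesis by blast
qed

theorem theorem18:
  fixes n :: nat
  shows "\<exists>(nxt :: (gf2vec \<times> gf2vec) list \<Rightarrow> gf2vec) (ans :: (gf2vec \<times> gf2vec) list \<Rightarrow> gf2vec).
           (\<forall>h. nxt h \<in> cube n) \<and>
           (\<forall>ou s. matousek_uso n ou s \<longrightarrow> ans (run nxt ou n) = s)"
proof (intro exI conjI allI impI)
  show "flip_last_query n h \<in> cube n" for h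
    by (rule flip_last_query_cube)
  show "flip_last_query n (run (flip_last_query n) ou n) = s" if "matousek_uso n ou s" for ou s
    using matousek_uso_flip_outmap_sink[OF that] by (simp add: flip_last_query_run)
qed

end
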